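(* Let $W\in\mathbb{D}_n$ satisfy the Ground Assumption and let $\sigma\subset\mathcal{E}$. Then $\sigma\in\mathcal{C}(W)$ if and only if $\sigma\sqcup\mathcal{I}\in FP(W)$.
   Context: Threshold-linear network: $\dot x_i=-x_i+[\sum_j W_{ij}x_j+b_i]_+$ with $[y]_+=\max(0,y)$; a fixed point is $x^*$ with $x^*=[Wx^*+b]_+$. A Dale matrix $W\in\mathbb{D}_n$ is an $n\times n$ real matrix with a partition $[n]=\mathcal{E}\sqcup\mathcal{I}$ such that $W_{ii}=0$, $W_{ji}\ge0$ for all $j$ if $i\in\mathcal{E}$, $W_{ji}\le0$ for all $j$ if $i\in\mathcal{I}$. Ground Assumption: $(I-W)_\sigma$ nonsingular for every nonempty $\sigma\subset[n]$. Excitatory support: $\mathrm{supp}_+x=\{i\in\mathcal{E}:x_i>0\}$. Combinatorial code: $\mathcal{C}(W)=\{\mathrm{supp}_+x^*: b\in\mathbb{R}^n_{\ge0},\ x^*\in\mathbb{R}^n_{\ge0}\text{ a fixed point of }(W,b)\}$. $FP(W,b)$ is the set of supports $\{i\in[n]:x^*_i>0\}$ of all fixed points $x^*$ of $(W,b)$, and $FP(W)=\bigcup_{b\in\mathbb{R}^n_{\ge0}}FP(W,b)$. *)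

theory Defs
  imports Jordan_Normal_Form.Determinant Jordan_Normal_Form.DL_Submatrix
begin

definition dale_matrix :: "nat \<Rightarrow> real mat \<Rightarrow> nat set \<Rightarrow> nat set \<Rightarrow> bool" where
  "dale_matrix n W E Inh \<longleftrightarrow>
     W \<in> carrier_mat n n \<and> E \<union> Inh = {0..<n} \<and> E \<inter> Inh = {} \<and>
     (\<forall>i<n. W $$ (i,i) = 0) \<and>
     (\<forall>i\<in>E. \<forall>j<n. W $$ (j,i) \<ge> 0) \<and>
     (\<forall>i\<in>Inh. \<forall>j<n. W $$ (j,i) \<le> 0)"

definition ground_assumption :: "nat \<Rightarrow> real mat \<Rightarrow> bool" where
  "ground_assumption n W \<longleftrightarrow>
     (\<forall>\<sigma>. \<sigma> \<noteq> {} \<longrightarrow> \<sigma> \<subseteq> {0..<n} \<longrightarrow>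
        det (submatrix (1\<^sub>m n - W) \<sigma> \<sigma>) \<noteq> 0)"

definition tln_fixed_point :: "nat \<Rightarrow> real mat \<Rightarrow> real vec \<Rightarrow> real vec \<Rightarrow> bool" where
  "tln_fixed_point n W b x \<longleftrightarrow>
     x \<in> carrier_vec n \<and> (\<forall>i<n. x $ i = max 0 ((W *\<^sub>v x) $ i + b $ i))"

definition nonneg_vec :: "nat \<Rightarrow> real vec \<Rightarrow> bool" where
  "nonneg_vec n v \<longleftrightarrow> v \<in> carrier_vec n \<and> (\<forall>i<n. v $ i \<ge> 0)"

definition supp_vec :: "nat \<Rightarrow> real vec \<Rightarrow> nat set" where
  "supp_vec n x = {i. i < n \<and> x $ i > 0}"

definition FP_b :: "nat \<Rightarrow> real mat \<Rightarrow> real vec \<Rightarrow> nat set set" where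
  "FP_b n W b = {supp_vec n x | x. tln_fixed_point n W b x}"

definition FP :: "nat \<Rightarrow> real mat \<Rightarrow> nat set set" where
  "FP n W = (\<Union>b\<in>{b. nonneg_vec n b}. FP_b n W b)"

definition comb_code :: "nat \<Rightarrow> real mat \<Rightarrow> nat set \<Rightarrow> nat set set" where
  "comb_code n W E = {{i \<in> E. x $ i > 0} | b x.
      nonneg_vec n b \<and> nonneg_vec n x \<and> tln_fixed_point n W b x}"

end

theory Submission
  imports Defs
begin

text \<open>If the input is nonnegative, inhibitory neurons can always be switched on without
  disturbing the excitatory part of a fixed point: raise every inhibitory rate above the
  total excitatory drive it receives. Since inhibitory columns of a Dale matrix are
  nonpositive, this only lowers the recurrent input of every neuron, so silent excitatory
  neurons stay silent, while every active neuron can be sustained at its new rate by a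
  nonnegative input. Conversely, a fixed point
  with support \<open>\<sigma> \<union> Inh\<close> has excitatory support \<open>\<sigma>\<close>.\<close>

lemma mult_mat_vec_nth_sum:
  assumes "W \<in> carrier_mat n n" "x \<in> carrier_vec n" "i < n"
  shows "(W *\<^sub>v x) $ i = (\<Sum>l\<in>{0..<n}. W $$ (i,l) * x $ l)"
  using assms by (auto simp: scalar_prod_def intro!: sum.cong)

lemma eq_max_0_iff: "(x::real) = max 0 t \<longleftrightarrow> (0 < x \<and> x = t) \<or> (x = 0 \<and> t \<le> 0)"
  by linarith

lemma tln_fixed_point_iff:
  "tln_fixed_point n W b x \<longleftrightarrow> x \<in> carrier_vec n \<and>
     (\<forall>i<n. (0 < x $ i \<and> x $ i = (W *\<^sub>v x) $ i + b $ i) \<or>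
            (x $ i = 0 \<and> (W *\<^sub>v x) $ i + b $ i \<le> 0))"
  unfolding tln_fixed_point_def eq_max_0_iff ..

lemma tln_fixed_point_nonneg:
  "tln_fixed_point n W b x \<Longrightarrow> nonneg_vec n x"
  unfolding tln_fixed_point_def nonneg_vec_def by simp

definition sustaining_input :: "nat \<Rightarrow> real mat \<Rightarrow> real vec \<Rightarrow> real vec \<Rightarrow> real vec" where
  "sustaining_input n W b y = vec n (\<lambda>i. if y $ i = 0 then b $ i else y $ i - (W *\<^sub>v y) $ i)"

lemma tln_fixed_point_sustaining_input:
  assumes "nonneg_vec n y" and "\<And>i. i < n \<Longrightarrow> y $ i = 0 \<Longrightarrow> (W *\<^sub>v y) $ i + b $ i \<le> 0"
  shows "tln_fixed_point n W (sustaining_input n W b y) y"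
  unfolding tln_fixed_point_iff
proof (intro conjI allI impI)
  show "y \<in> carrier_vec n" using assms(1) unfolding nonneg_vec_def ..
  fix i assume i: "i < n"
  have "0 \<le> y $ i" using assms(1) i unfolding nonneg_vec_def by blast
  with assms(2)[OF i] i show "(0 < y $ i \<and> y $ i = (W *\<^sub>v y) $ i + sustaining_input n W b y $ i) \<or>
      (y $ i = 0 \<and> (W *\<^sub>v y) $ i + sustaining_input n W b y $ i \<le> 0)"
    unfolding sustaining_input_def by auto
qed

lemma sustaining_input_nonneg:
  assumes "nonneg_vec n b" and "\<And>i. i < n \<Longrightarrow> y $ i \<noteq> 0 \<Longrightarrow> (W *\<^sub>v y) $ i \<le> y $ i"
  shows "nonneg_vec n (sustaining_input n W b y)"
  using assms unfolding nonneg_vec_def sustaining_input_def by auto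

context
  fixes n :: nat and W :: "real mat" and E Inh :: "nat set"
  assumes dale: "dale_matrix n W E Inh"
begin

private lemma W_carrier: "W \<in> carrier_mat n n"
  and partition: "E \<union> Inh = {0..<n}" "E \<inter> Inh = {}"
  and exc_col_nonneg: "i \<in> E \<Longrightarrow> j < n \<Longrightarrow> W $$ (j,i) \<ge> 0"
  and inh_col_nonpos: "i \<in> Inh \<Longrightarrow> j < n \<Longrightarrow> W $$ (j,i) \<le> 0"
  using dale unfolding dale_matrix_def by auto

private lemma exc_lt: "i \<in> E \<Longrightarrow> i < n" and inh_lt: "i \<in> Inh \<Longrightarrow> i < n"
  using partition by auto

private lemma finite_exc: "finite E" and finite_inh: "finite Inh"
  using partition by (metis finite_Un finite_atLeastLessThan)+

lemma dale_mult_vec_antimono_inh: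
  assumes "x \<in> carrier_vec n" "y \<in> carrier_vec n" "i < n"
    and "\<And>j. j \<in> E \<Longrightarrow> y $ j = x $ j" and "\<And>j. j \<in> Inh \<Longrightarrow> x $ j \<le> y $ j"
  shows "(W *\<^sub>v y) $ i \<le> (W *\<^sub>v x) $ i"
proof -
  have "W $$ (i,l) * y $ l \<le> W $$ (i,l) * x $ l" if l: "l \<in> {0..<n}" for l
  proof (cases "l \<in> E")
    case False
    then have "l \<in> Inh" using l partition by auto
    with assms(3,5) show ?thesis by (simp add: inh_col_nonpos mult_left_mono_neg)
  qed (simp add: assms(4))
  then have "(\<Sum>l\<in>{0..<n}. W $$ (i,l) * y $ l) \<le> (\<Sum>l\<in>{0..<n}. W $$ (i,l) * x $ l)"
    by (rule sum_mono)
  then show ?thesis by (simp add: mult_mat_vec_nth_sum[OF W_carrier] assms(1-3))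
qed

lemma dale_mult_vec_le_exc_drive:
  assumes "y \<in> carrier_vec n" "k < n" and "\<And>j. j \<in> Inh \<Longrightarrow> 0 \<le> y $ j"
  shows "(W *\<^sub>v y) $ k \<le> (\<Sum>l\<in>E. W $$ (k,l) * y $ l)"
proof -
  have "(\<Sum>l\<in>Inh. W $$ (k,l) * y $ l) \<le> 0"
    using assms(2,3) inh_col_nonpos by (intro sum_nonpos) (simp add: mult_nonpos_nonneg)
  moreover have "(W *\<^sub>v y) $ k = (\<Sum>l\<in>E. W $$ (k,l) * y $ l) + (\<Sum>l\<in>Inh. W $$ (k,l) * y $ l)"
    using mult_mat_vec_nth_sum[OF W_carrier assms(1,2)] partition finite_exc finite_inh
    by (metis sum.union_disjoint)
  ultimately show ?thesis by linarith
qed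

lemma exc_drive_nonneg:
  assumes "nonneg_vec n x" "k < n"
  shows "0 \<le> (\<Sum>l\<in>E. W $$ (k,l) * x $ l)"
  using assms exc_col_nonneg exc_lt unfolding nonneg_vec_def by (intro sum_nonneg) simp

lemma dale_raise_inh:
  assumes "nonneg_vec n x"
  obtains y where "y \<in> carrier_vec n" "\<And>j. j \<in> E \<Longrightarrow> y $ j = x $ j"
    "\<And>j. j \<in> Inh \<Longrightarrow> x $ j \<le> y $ j" "\<And>j. j \<in> Inh \<Longrightarrow> 0 < y $ j"
    "\<And>j. j \<in> Inh \<Longrightarrow> (W *\<^sub>v y) $ j < y $ j"
proof
  have x0: "\<And>i. i < n \<Longrightarrow> 0 \<le> x $ i" using assms unfolding nonneg_vec_def by auto
  define c where "c k = (\<Sum>l\<in>E. W $$ (k,l) * x $ l)" for k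
  have c0: "\<And>k. k < n \<Longrightarrow> 0 \<le> c k" unfolding c_def using exc_drive_nonneg[OF assms] .
  define y where "y = vec n (\<lambda>j. if j \<in> Inh then x $ j + 1 + c j else x $ j)"
  show yc: "y \<in> carrier_vec n" unfolding y_def by simp
  show yE: "\<And>j. j \<in> E \<Longrightarrow> y $ j = x $ j"
    using partition(2) exc_lt by (auto simp: y_def)
  have yI: "\<And>j. j \<in> Inh \<Longrightarrow> y $ j = x $ j + 1 + c j"
    using inh_lt by (auto simp: y_def)
  show "x $ j \<le> y $ j" if "j \<in> Inh" for j
    using yI[OF that] c0[OF inh_lt[OF that]] by linarith
  show y_pos: "0 < y $ j" if "j \<in> Inh" for j
    using yI[OF that] x0[OF inh_lt[OF that]] c0[OF inh_lt[OF that]] by linarith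
  show "(W *\<^sub>v y) $ j < y $ j" if j: "j \<in> Inh" for j
  proof -
    have "(\<Sum>l\<in>E. W $$ (j,l) * y $ l) = c j" unfolding c_def by (simp add: yE)
    then have "(W *\<^sub>v y) $ j \<le> c j"
      using dale_mult_vec_le_exc_drive[OF yc inh_lt[OF j]] y_pos less_imp_le by metis
    then show ?thesis using yI[OF j] x0[OF inh_lt[OF j]] by linarith
  qed
qed

lemma fixed_point_activate_inh:
  assumes b: "nonneg_vec n b" and fp: "tln_fixed_point n W b x"
  obtains b' y where "nonneg_vec n b'" "tln_fixed_point n W b' y"
    "supp_vec n y = {i \<in> E. 0 < x $ i} \<union> Inh"
proof -
  have x: "nonneg_vec n x" using tln_fixed_point_nonneg[OF fp] .
  then have x0: "\<And>i. i < n \<Longrightarrow> 0 \<le> x $ i" unfolding nonneg_vec_def by auto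
  have x_eq: "\<And>i. i < n \<Longrightarrow> (0 < x $ i \<and> x $ i = (W *\<^sub>v x) $ i + b $ i) \<or>
                               (x $ i = 0 \<and> (W *\<^sub>v x) $ i + b $ i \<le> 0)"
    using fp unfolding tln_fixed_point_iff by blast
  have b0: "\<And>i. i < n \<Longrightarrow> 0 \<le> b $ i" using b unfolding nonneg_vec_def by auto
  obtain y where yc: "y \<in> carrier_vec n" and yE: "\<And>j. j \<in> E \<Longrightarrow> y $ j = x $ j"
    and x_le_y: "\<And>j. j \<in> Inh \<Longrightarrow> x $ j \<le> y $ j" and yI_pos: "\<And>j. j \<in> Inh \<Longrightarrow> 0 < y $ j"
    and Wy_lt_y: "\<And>j. j \<in> Inh \<Longrightarrow> (W *\<^sub>v y) $ j < y $ j"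
    using dale_raise_inh[OF x] by blast
  have Wy_le_Wx: "\<And>i. i < n \<Longrightarrow> (W *\<^sub>v y) $ i \<le> (W *\<^sub>v x) $ i"
    using dale_mult_vec_antimono_inh[OF _ yc _ yE x_le_y] x unfolding nonneg_vec_def by blast
  have cases_exc_inh: "i \<in> E \<or> i \<in> Inh" if "i < n" for i using that partition by auto
  have y: "nonneg_vec n y"
    unfolding nonneg_vec_def using yc yE x0 yI_pos cases_exc_inh by (fastforce intro: less_imp_le)
  have "tln_fixed_point n W (sustaining_input n W b y) y"
  proof (rule tln_fixed_point_sustaining_input[OF y])
    fix i assume i: "i < n" and "y $ i = 0"
    then have "i \<in> E" "x $ i = 0" using cases_exc_inh[OF i] yE yI_pos by force+
    then show "(W *\<^sub>v y) $ i + b $ i \<le> 0" using x_eq[OF i] Wy_le_Wx[OF i] by auto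
  qed
  moreover have "nonneg_vec n (sustaining_input n W b y)"
  proof (rule sustaining_input_nonneg[OF b])
    fix i assume i: "i < n" and pos: "y $ i \<noteq> 0"
    show "(W *\<^sub>v y) $ i \<le> y $ i"
    proof (cases "i \<in> E")
      case True
      then have "x $ i = (W *\<^sub>v x) $ i + b $ i" using x_eq[OF i] pos yE by auto
      then show ?thesis using yE[OF True] Wy_le_Wx[OF i] b0[OF i] by simp
    next
      case False
      then show ?thesis using cases_exc_inh[OF i] Wy_lt_y by (simp add: less_imp_le)
    qed
  qed
  moreover have "supp_vec n y = {i \<in> E. 0 < x $ i} \<union> Inh"
    using yE yI_pos exc_lt inh_lt partition unfolding supp_vec_def by fastforce
  ultimately show ?thesis using that by blast
qed

lemma exc_support_of_supp_vec:
  assumes "\<sigma> \<subseteq> E" "supp_vec n x = \<sigma> \<union> Inh"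
  shows "{i \<in> E. 0 < x $ i} = \<sigma>"
  using assms partition exc_lt unfolding supp_vec_def by blast

end

theorem mainTheorem13:
  fixes n :: nat and W :: "real mat" and E Inh \<sigma> :: "nat set"
  assumes "dale_matrix n W E Inh"
    and "ground_assumption n W"
    and "\<sigma> \<subseteq> E"
  shows "\<sigma> \<in> comb_code n W E \<longleftrightarrow> \<sigma> \<union> Inh \<in> FP n W"
proof
  assume "\<sigma> \<in> comb_code n W E"
  then obtain b x where "nonneg_vec n b" "tln_fixed_point n W b x"
    and \<sigma>: "\<sigma> = {i \<in> E. 0 < x $ i}"
    unfolding comb_code_def by auto
  then obtain b' y where "nonneg_vec n b'" "tln_fixed_point n W b' y" "supp_vec n y = \<sigma> \<union> Inh"
    using fixed_point_activate_inh[OF assms(1)] by metis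
  then show "\<sigma> \<union> Inh \<in> FP n W" unfolding FP_def FP_b_def by blast
next
  assume "\<sigma> \<union> Inh \<in> FP n W"
  then obtain b x where "nonneg_vec n b" "tln_fixed_point n W b x" "supp_vec n x = \<sigma> \<union> Inh"
    unfolding FP_def FP_b_def by auto
  then show "\<sigma> \<in> comb_code n W E"
    using exc_support_of_supp_vec[OF assms(1,3)] tln_fixed_point_nonneg
    unfolding comb_code_def by blast
qed

end
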